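(* For every $\gamma\in(0,\frac12)$ there is $c=c(\gamma)>0$ such that for every integer $k\ge3$ and every $1\le i\le k-1$, $$e_{i,k},\ p_{0\to1,i,k},\ p_{1\to0,i,k}\in[c,1-c].$$
   Context: $\|u\|$ denotes Hamming weight and $\mathbb{E}\mathrm{ven}_k=\{u\in\mathbb{F}_2^k:\|u\|\text{ even}\}$. For an integer $k\ge2$ and $\gamma\in(0,\frac12)$, $\alpha=\alpha(k,\gamma)$ is the unique $\alpha\in(0,1)$ with $\alpha\frac{(1+\alpha)^{k-1}-(1-\alpha)^{k-1}}{(1+\alpha)^k+(1-\alpha)^k}=\gamma$, and $P_{k,\gamma}$ is the distribution on $\mathbb{F}_2^k$ with $P_{k,\gamma}(u)=\alpha^{\|u\|}/Z$ for $u\in\mathbb{E}\mathrm{ven}_k$ and $0$ otherwise, where $Z=\frac{(1+\alpha)^k+(1-\alpha)^k}{2}$. Define $$p_{0\to1,i,k}=\alpha\frac{(1+\alpha)^{k-i}-(1-\alpha)^{k-i}}{(1+\alpha)^{k-i+1}+(1-\alpha)^{k-i+1}},\qquad p_{1\to0,i,k}=\alpha\frac{(1+\alpha)^{k-i}+(1-\alpha)^{k-i}}{(1+\alpha)^{k-i+1}-(1-\alpha)^{k-i+1}},$$ and $e_{i,k}=\Pr_{u\sim P_{k,\gamma}}\big(u_1+\dots+u_i\text{ is odd}\big)$. *)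

theory Defs
  imports "HOL-Analysis.Analysis"
begin

text \<open>Vectors of F_2^k are represented as boolean lists of length k; True = 1.\<close>

definition cube :: "nat \<Rightarrow> bool list set" where
  "cube k = {u. length u = k}"

definition hw :: "bool list \<Rightarrow> nat" where
  "hw u = length (filter id u)"

definition Even_set :: "nat \<Rightarrow> bool list set" where
  "Even_set k = {u \<in> cube k. even (hw u)}"

definition gamma_of :: "nat \<Rightarrow> real \<Rightarrow> real" where
  "gamma_of k a = a * ((1 + a) ^ (k - 1) - (1 - a) ^ (k - 1)) / ((1 + a) ^ k + (1 - a) ^ k)"

definition alpha :: "nat \<Rightarrow> real \<Rightarrow> real" where
  "alpha k \<gamma> = (THE a. 0 < a \<and> a < 1 \<and> gamma_of k a = \<gamma>)"

definition Zc :: "nat \<Rightarrow> real \<Rightarrow> real" where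
  "Zc k \<gamma> = ((1 + alpha k \<gamma>) ^ k + (1 - alpha k \<gamma>) ^ k) / 2"

definition P :: "nat \<Rightarrow> real \<Rightarrow> bool list \<Rightarrow> real" where
  "P k \<gamma> u = (if u \<in> Even_set k then alpha k \<gamma> ^ hw u / Zc k \<gamma> else 0)"

definition p01 :: "real \<Rightarrow> nat \<Rightarrow> nat \<Rightarrow> real" where
  "p01 \<gamma> i k = (let a = alpha k \<gamma> in
     a * ((1 + a) ^ (k - i) - (1 - a) ^ (k - i)) / ((1 + a) ^ (k - i + 1) + (1 - a) ^ (k - i + 1)))"

definition p10 :: "real \<Rightarrow> nat \<Rightarrow> nat \<Rightarrow> real" where
  "p10 \<gamma> i k = (let a = alpha k \<gamma> in
     a * ((1 + a) ^ (k - i) + (1 - a) ^ (k - i)) / ((1 + a) ^ (k - i + 1) - (1 - a) ^ (k - i + 1)))"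

definition e :: "real \<Rightarrow> nat \<Rightarrow> nat \<Rightarrow> real" where
  "e \<gamma> i k = (\<Sum>u \<in> {u \<in> cube k. odd (hw (take i u))}. P k \<gamma> u)"

end

theory Submission
  imports Defs
begin

text \<open>
  Splitting a vector into its first \<open>i\<close> and last \<open>k - i\<close> coordinates factorises the weight
  \<open>\<alpha> ^ hw u\<close>, so \<open>e \<gamma> i k = O i * O (k - i) / Z\<close> with \<open>O n = ((1 + \<alpha>) ^ n - (1 - \<alpha>) ^ n) / 2\<close>
  the odd-weight part of \<open>(1 + \<alpha>) ^ n\<close>. Thus \<open>e\<close>, \<open>p01\<close> and \<open>p10\<close> are explicit expressions in
  \<open>p = 1 + \<alpha>\<close> and \<open>q = 1 - \<alpha>\<close>, and elementary estimates such as \<open>p ^ n - q ^ n \<ge> (p - q) p ^ (n - 1)\<close>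
  place each of them in \<open>[\<alpha>\<^sup>2 / 4, 1 / 2]\<close>. Finally \<open>\<gamma> = gamma_of k \<alpha> < \<alpha>\<close>, so \<open>c = \<gamma>\<^sup>2 / 4\<close> works
  uniformly in \<open>k\<close> and \<open>i\<close>.
\<close>

lemma finite_cube: "finite (cube n)"
proof -
  have "cube n = {xs. set xs \<subseteq> (UNIV::bool set) \<and> length xs = n}"
    by (auto simp: cube_def)
  then show ?thesis using finite_lists_length_eq[of "UNIV::bool set" n] by simp
qed

lemma cube_Suc: "cube (Suc n) = Cons True ` cube n \<union> Cons False ` cube n"
proof
  show "cube (Suc n) \<subseteq> Cons True ` cube n \<union> Cons False ` cube n"
  proof
    fix u assume "u \<in> cube (Suc n)"
    then obtain b v where "u = b # v" "length v = n"
      by (cases u) (auto simp: cube_def)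
    then show "u \<in> Cons True ` cube n \<union> Cons False ` cube n"
      by (cases b) (auto simp: cube_def)
  qed
qed (auto simp: cube_def)

lemma hw_simps [simp]:
  "hw [] = 0" "hw (True # u) = Suc (hw u)" "hw (False # u) = hw u" "hw (x @ y) = hw x + hw y"
  by (auto simp: hw_def)

lemma sum_cube_Suc:
  fixes f :: "bool list \<Rightarrow> real"
  shows "(\<Sum>u\<in>cube (Suc n). f u) = (\<Sum>v\<in>cube n. f (True # v)) + (\<Sum>v\<in>cube n. f (False # v))"
proof -
  have fin: "finite (Cons b ` cube n)" for b using finite_cube by simp
  have "Cons True ` cube n \<inter> Cons False ` cube n = {}" by auto
  then show ?thesis
    unfolding cube_Suc by (simp add: sum.union_disjoint[OF fin fin] sum.reindex)
qed

lemma sum_cube_append: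
  fixes f :: "bool list \<Rightarrow> real"
  shows "(\<Sum>u\<in>cube (i + j). f u) = (\<Sum>x\<in>cube i. \<Sum>y\<in>cube j. f (x @ y))"
proof -
  have img: "cube (i + j) = (\<lambda>(x, y). x @ y) ` (cube i \<times> cube j)"
  proof
    show "cube (i + j) \<subseteq> (\<lambda>(x, y). x @ y) ` (cube i \<times> cube j)"
    proof
      fix u assume "u \<in> cube (i + j)"
      then have "(take i u, drop i u) \<in> cube i \<times> cube j"
        by (auto simp: cube_def)
      then show "u \<in> (\<lambda>(x, y). x @ y) ` (cube i \<times> cube j)"
        by (metis (no_types, lifting) append_take_drop_id case_prod_conv image_eqI)
    qed
  qed (auto simp: cube_def)
  have "inj_on (\<lambda>(x, y). x @ y) (cube i \<times> cube j)"
    by (auto simp: inj_on_def cube_def)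
  then show ?thesis
    unfolding img by (simp add: sum.reindex sum.cartesian_product split_def)
qed

lemma sum_cube_weight_powers_by_parity:
  fixes a :: real
  shows "(\<Sum>u\<in>cube n. if odd (hw u) then a ^ hw u else 0) = ((1 + a) ^ n - (1 - a) ^ n) / 2"
      (is "?O n = _")
    and "(\<Sum>u\<in>cube n. if even (hw u) then a ^ hw u else 0) = ((1 + a) ^ n + (1 - a) ^ n) / 2"
      (is "?E n = _")
proof (induction n)
  case 0
  have "cube 0 = {[]}" by (auto simp: cube_def)
  then show "?O 0 = ((1 + a) ^ 0 - (1 - a) ^ 0) / 2" and "?E 0 = ((1 + a) ^ 0 + (1 - a) ^ 0) / 2"
    by simp_all
next
  case (Suc n)
  have "?O (Suc n) = a * ?E n + ?O n" and "?E (Suc n) = a * ?O n + ?E n"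
    unfolding sum_cube_Suc sum_distrib_left by (auto intro!: arg_cong2[where f = "(+)"] sum.cong)
  then show "?O (Suc n) = ((1 + a) ^ Suc n - (1 - a) ^ Suc n) / 2"
    and "?E (Suc n) = ((1 + a) ^ Suc n + (1 - a) ^ Suc n) / 2"
    using Suc by (simp_all add: field_simps)
qed

lemma e_closed_form:
  assumes "i \<le> k"
  shows "e \<gamma> i k = (((1 + alpha k \<gamma>) ^ i - (1 - alpha k \<gamma>) ^ i) / 2) *
           (((1 + alpha k \<gamma>) ^ (k - i) - (1 - alpha k \<gamma>) ^ (k - i)) / 2) / Zc k \<gamma>"
proof -
  define a where "a = alpha k \<gamma>"
  define odd_weight where "odd_weight u = (if odd (hw u) then a ^ hw u else 0)" for u
  have k: "k = i + (k - i)" using assms by simp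
  have "e \<gamma> i k = (\<Sum>u\<in>cube k. if odd (hw (take i u)) then P k \<gamma> u else 0)"
    unfolding e_def by (rule sum.inter_filter[OF finite_cube])
  also have "\<dots> = (\<Sum>x\<in>cube i. \<Sum>y\<in>cube (k - i).
      if odd (hw (take i (x @ y))) then P k \<gamma> (x @ y) else 0)"
    by (subst k) (rule sum_cube_append)
  also have "\<dots> = (\<Sum>x\<in>cube i. \<Sum>y\<in>cube (k - i). odd_weight x * odd_weight y / Zc k \<gamma>)"
  proof (intro sum.cong refl)
    fix x y assume "x \<in> cube i" "y \<in> cube (k - i)"
    then have "take i (x @ y) = x" "(x @ y \<in> Even_set k) = even (hw x + hw y)"
      using assms by (auto simp: cube_def Even_set_def)
    then show "(if odd (hw (take i (x @ y))) then P k \<gamma> (x @ y) else 0)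
               = odd_weight x * odd_weight y / Zc k \<gamma>"
      by (auto simp: P_def odd_weight_def a_def power_add)
  qed
  also have "\<dots> = (\<Sum>x\<in>cube i. odd_weight x) * (\<Sum>y\<in>cube (k - i). odd_weight y) / Zc k \<gamma>"
    by (simp add: sum_product sum_divide_distrib)
  finally show ?thesis
    unfolding odd_weight_def sum_cube_weight_powers_by_parity a_def .
qed

lemma gamma_of_less:
  fixes a :: real
  assumes "0 < a" "a < 1" "1 \<le> k"
  shows "gamma_of k a < a"
proof -
  have "(1 + a) ^ (k - 1) - (1 - a) ^ (k - 1) \<le> (1 + a) ^ (k - 1)" using assms by simp
  also have "\<dots> \<le> (1 + a) ^ k" using assms by (intro power_increasing) auto
  also have "\<dots> < (1 + a) ^ k + (1 - a) ^ k" using assms by simp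
  finally show ?thesis
    using assms unfolding gamma_of_def by (simp add: pos_divide_less_eq add_pos_nonneg)
qed

text \<open>With \<open>r = (1 - a)/(1 + a)\<close>, which decreases in \<open>a\<close>, both factors below increase in \<open>a\<close>.\<close>

lemma gamma_of_ratio_form:
  fixes a :: real
  assumes "0 < a" "a < 1" "1 \<le> k"
  defines "r \<equiv> (1 - a) / (1 + a)"
  shows "gamma_of k a = a / (1 + a) * ((1 - r ^ (k - 1)) / (1 + r ^ k))"
proof -
  have q: "1 - a = r * (1 + a)" using assms by (simp add: r_def)
  have p: "(1 + a) ^ k = (1 + a) * (1 + a) ^ (k - 1)"
    using assms by (metis Suc_diff_le diff_Suc_1 power_Suc)
  have num: "(1 + a) ^ (k - 1) - (1 - a) ^ (k - 1) = (1 + a) ^ (k - 1) * (1 - r ^ (k - 1))"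
    unfolding q power_mult_distrib by (simp add: algebra_simps)
  have den: "(1 + a) ^ k + (1 - a) ^ k = (1 + a) * (1 + a) ^ (k - 1) * (1 + r ^ k)"
    unfolding q power_mult_distrib p by (simp add: algebra_simps)
  have "(1 + a) ^ (k - 1) > 0" using assms by simp
  then show ?thesis
    unfolding gamma_of_def num den by simp
qed

lemma gamma_of_strict_mono:
  fixes a b :: real
  assumes "0 < a" "a < b" "b < 1" "2 \<le> k"
  shows "gamma_of k a < gamma_of k b"
proof -
  define g where "g r = (1 - r ^ (k - 1)) / (1 + r ^ k)" for r :: real
  define ra where "ra = (1 - a) / (1 + a)"
  define rb where "rb = (1 - b) / (1 + b)"
  have rb0: "0 \<le> rb" and rab: "rb < ra" and ra1: "ra < 1"
    using assms by (auto simp: ra_def rb_def field_simps)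
  have "0 < g ra"
    unfolding g_def using rb0 rab ra1 assms
    by (intro divide_pos_pos) (auto simp: power_less_one_iff add_pos_nonneg)
  have "g ra \<le> g rb"
    unfolding g_def using rb0 rab ra1
    by (intro frac_le) (auto simp: power_le_one power_mono add_pos_nonneg)
  have "a / (1 + a) * g ra < b / (1 + b) * g ra"
    using \<open>0 < g ra\<close> assms by (intro mult_strict_right_mono) (auto simp: field_simps)
  also have "\<dots> \<le> b / (1 + b) * g rb"
    using \<open>g ra \<le> g rb\<close> assms by (intro mult_left_mono) auto
  finally show ?thesis
    using gamma_of_ratio_form[of a k] gamma_of_ratio_form[of b k] assms
    unfolding g_def ra_def rb_def by simp
qed

lemma gamma_of_one: "2 \<le> k \<Longrightarrow> gamma_of k 1 = 1 / 2"
  by (cases k) (auto simp: gamma_of_def)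

lemma alpha_spec:
  assumes "0 < \<gamma>" "\<gamma> < 1 / 2" "2 \<le> k"
  shows "0 < alpha k \<gamma>" "alpha k \<gamma> < 1" "gamma_of k (alpha k \<gamma>) = \<gamma>"
proof -
  have "(1 + a) ^ k + (1 - a) ^ k \<noteq> 0" if "a \<in> {\<gamma>..1}" for a :: real
    using that assms add_pos_nonneg[of "(1 + a) ^ k" "(1 - a) ^ k"] by auto
  then have "continuous_on {\<gamma>..1} (gamma_of k)"
    unfolding gamma_of_def by (intro continuous_intros) auto
  moreover have "gamma_of k \<gamma> < \<gamma>" using gamma_of_less assms by simp
  ultimately obtain x where x: "\<gamma> \<le> x" "x \<le> 1" "gamma_of k x = \<gamma>"
    using IVT'[of "gamma_of k" \<gamma> \<gamma> 1] gamma_of_one assms by auto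
  have "x \<noteq> 1" using x gamma_of_one assms by auto
  have "\<exists>!a. 0 < a \<and> a < 1 \<and> gamma_of k a = \<gamma>"
  proof
    show "0 < x \<and> x < 1 \<and> gamma_of k x = \<gamma>" using x \<open>x \<noteq> 1\<close> assms by auto
  next
    fix y assume y: "0 < y \<and> y < 1 \<and> gamma_of k y = \<gamma>"
    show "y = x"
      using gamma_of_strict_mono[of y x k] gamma_of_strict_mono[of x y k] x \<open>x \<noteq> 1\<close> y assms
      by (cases y x rule: linorder_cases) auto
  qed
  from theI'[OF this]
  show "0 < alpha k \<gamma>" "alpha k \<gamma> < 1" "gamma_of k (alpha k \<gamma>) = \<gamma>"
    unfolding alpha_def by auto
qed

lemma diff_power_Suc_ge:
  fixes p q :: real
  assumes "0 \<le> q" "q \<le> p"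
  shows "(p - q) * p ^ n \<le> p ^ Suc n - q ^ Suc n"
proof (induction n)
  case (Suc n)
  have "p * ((p - q) * p ^ n) + 0 \<le> p * (p ^ Suc n - q ^ Suc n) + q ^ Suc n * (p - q)"
    using Suc assms by (intro add_mono mult_left_mono mult_nonneg_nonneg) auto
  then show ?case by (simp add: algebra_simps)
qed simp

lemma e_closed_form_bounds:
  fixes a :: real
  assumes "0 < a" "a < 1" "1 \<le> i" "1 \<le> j"
  defines "X \<equiv> (1 + a) ^ i - (1 - a) ^ i" and "Y \<equiv> (1 + a) ^ j - (1 - a) ^ j"
    and "D \<equiv> (1 + a) ^ (i + j) + (1 - a) ^ (i + j)"
  shows "a\<^sup>2 / 4 \<le> (X / 2) * (Y / 2) / (D / 2)" "(X / 2) * (Y / 2) / (D / 2) \<le> 1 / 2"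
proof -
  define p where "p = 1 + a"
  define q where "q = 1 - a"
  obtain i' j' where i: "i = Suc i'" and j: "j = Suc j'"
    using assms by (metis Suc_le_D One_nat_def)
  have q0: "0 \<le> q" and qp: "q \<le> p" and p0: "0 < p" and p2: "p \<le> 2" and pq: "p - q = 2 * a"
    using assms by (auto simp: p_def q_def)
  have E: "(X / 2) * (Y / 2) / (D / 2) = X * Y / (2 * D)" by simp
  have D0: "0 < D" unfolding D_def using q0 p0 by (simp add: p_def q_def add_pos_nonneg)
  have X: "2 * a * p ^ i' \<le> X" and Y: "2 * a * p ^ j' \<le> Y"
    using diff_power_Suc_ge[OF q0 qp] pq unfolding X_def Y_def i j p_def q_def by metis+
  have "D \<le> 2 * p ^ (i + j)"
    unfolding D_def p_def[symmetric] q_def[symmetric] using q0 qp by (simp add: power_mono)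
  also have "\<dots> = 2 * p\<^sup>2 * (p ^ i' * p ^ j')"
    unfolding i j by (simp add: power_add power2_eq_square)
  finally have "a\<^sup>2 / 2 * D \<le> a\<^sup>2 / 2 * (2 * p\<^sup>2 * (p ^ i' * p ^ j'))"
    by (intro mult_left_mono) auto
  also have "\<dots> \<le> a\<^sup>2 / 2 * (2 * 2\<^sup>2 * (p ^ i' * p ^ j'))"
    using p0 p2 by (intro mult_left_mono mult_right_mono power_mono) auto
  also have "\<dots> = (2 * a * p ^ i') * (2 * a * p ^ j')" by (simp add: power2_eq_square)
  also have "\<dots> \<le> X * Y"
    using X Y assms p0 by (intro mult_mono) auto
  finally show "a\<^sup>2 / 4 \<le> (X / 2) * (Y / 2) / (D / 2)"
    unfolding E using D0 by (simp add: le_divide_eq mult.commute)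
  have "X \<le> p ^ i" "Y \<le> p ^ j"
    using q0 by (simp_all add: X_def Y_def p_def q_def)
  then have "X * Y \<le> p ^ i * p ^ j"
    using X Y assms p0 by (intro mult_mono) auto
  also have "\<dots> \<le> D" using q0 by (simp add: D_def p_def q_def power_add)
  finally show "(X / 2) * (Y / 2) / (D / 2) \<le> 1 / 2"
    unfolding E using D0 by (simp add: divide_le_eq)
qed

lemma p01_closed_form_bounds:
  fixes a :: real
  assumes "0 < a" "a < 1" "1 \<le> m"
  defines "N \<equiv> (1 + a) ^ m - (1 - a) ^ m" and "D \<equiv> (1 + a) ^ (m + 1) + (1 - a) ^ (m + 1)"
  shows "a\<^sup>2 / 4 \<le> a * N / D" "a * N / D \<le> 1 / 2"
proof -
  define p where "p = 1 + a"
  define q where "q = 1 - a"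
  obtain m' where m: "m = Suc m'" using assms by (metis Suc_le_D One_nat_def)
  have q0: "0 \<le> q" and qp: "q \<le> p" and p0: "0 < p" and p2: "p \<le> 2" and pq: "p - q = 2 * a"
    using assms by (auto simp: p_def q_def)
  have D0: "0 < D" unfolding D_def using q0 p0 by (simp add: p_def q_def add_pos_nonneg)
  have "D \<le> 2 * p ^ (m + 1)"
    unfolding D_def p_def[symmetric] q_def[symmetric] using power_mono[OF qp q0, of "m + 1"] by simp
  also have "\<dots> = 2 * p\<^sup>2 * p ^ m'" unfolding m by (simp add: power2_eq_square)
  finally have "a\<^sup>2 / 4 * D \<le> a\<^sup>2 / 4 * (2 * p\<^sup>2 * p ^ m')"
    by (intro mult_left_mono) auto
  also have "\<dots> \<le> a\<^sup>2 / 4 * (2 * 2\<^sup>2 * p ^ m')"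
    using p0 p2 by (intro mult_left_mono mult_right_mono power_mono) auto
  also have "\<dots> = a * (2 * a * p ^ m')" by (simp add: power2_eq_square)
  also have "\<dots> \<le> a * N"
    using diff_power_Suc_ge[OF q0 qp, of m'] pq assms
    unfolding N_def m p_def q_def by (intro mult_left_mono) auto
  finally show "a\<^sup>2 / 4 \<le> a * N / D" using D0 by (simp add: le_divide_eq)
  have "a * N \<le> a * p ^ m" using q0 assms by (simp add: N_def p_def q_def)
  also have "\<dots> \<le> p * p ^ m / 2" using p0 assms by (simp add: p_def field_simps)
  also have "\<dots> \<le> D / 2" using q0 by (simp add: D_def p_def q_def)
  finally show "a * N / D \<le> 1 / 2" using D0 by (simp add: divide_le_eq)
qed

lemma p10_closed_form_bounds:
  fixes a :: real
  assumes "0 < a" "a < 1" "1 \<le> m"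
  defines "N \<equiv> (1 + a) ^ m + (1 - a) ^ m" and "D \<equiv> (1 + a) ^ (m + 1) - (1 - a) ^ (m + 1)"
  shows "a\<^sup>2 / 4 \<le> a * N / D" "a * N / D \<le> 1 / 2"
proof -
  define p where "p = 1 + a"
  define q where "q = 1 - a"
  obtain m' where m: "m = Suc m'" using assms by (metis Suc_le_D One_nat_def)
  have q0: "0 \<le> q" and qp: "q < p" and p2: "p \<le> 2" and pq: "p - q = 2 * a"
    using assms by (auto simp: p_def q_def)
  have D0: "0 < D"
    unfolding D_def p_def[symmetric] q_def[symmetric] using power_strict_mono[OF qp q0, of "m + 1"] by simp
  have "a\<^sup>2 / 4 * D \<le> a / 2 * D"
    using D0 assms by (intro mult_right_mono) (auto simp: power2_eq_square)
  also have "\<dots> \<le> a / 2 * (2 * p ^ m)"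
  proof (intro mult_left_mono)
    have "D \<le> p * p ^ m" using q0 by (simp add: D_def p_def q_def)
    also have "\<dots> \<le> 2 * p ^ m" using p2 assms by (intro mult_right_mono) (auto simp: p_def)
    finally show "D \<le> 2 * p ^ m" .
  qed (use assms in auto)
  also have "\<dots> \<le> a * N" using q0 assms by (simp add: N_def p_def q_def)
  finally show "a\<^sup>2 / 4 \<le> a * N / D" using D0 by (simp add: le_divide_eq)
  txt \<open>\<open>2 a N = (p - q) (p ^ m + q ^ m) = D - (q p ^ m - p q ^ m)\<close>\<close>
  have "p * q * q ^ m' \<le> p * q * p ^ m'"
    using q0 qp by (intro mult_left_mono power_mono) auto
  then have "p * q ^ m \<le> q * p ^ m" unfolding m by (simp add: mult_ac)
  then have "2 * a * N \<le> D"
    unfolding N_def D_def p_def[symmetric] q_def[symmetric] pq[symmetric]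
    by (simp add: algebra_simps)
  then show "a * N / D \<le> 1 / 2" using D0 by (simp add: divide_le_eq)
qed

theorem mainTheorem13:
  fixes \<gamma> :: real
  assumes "0 < \<gamma>" and "\<gamma> < 1/2"
  shows "\<exists>c>0. \<forall>k i. 3 \<le> k \<longrightarrow> 1 \<le> i \<longrightarrow> i \<le> k - 1 \<longrightarrow>
           e \<gamma> i k \<in> {c..1-c} \<and> p01 \<gamma> i k \<in> {c..1-c} \<and> p10 \<gamma> i k \<in> {c..1-c}"
proof (intro exI[of _ "\<gamma>\<^sup>2 / 4"] conjI allI impI)
  show "0 < \<gamma>\<^sup>2 / 4" using assms by simp
  fix k i :: nat
  assume "3 \<le> k" "1 \<le> i" "i \<le> k - 1"
  then have k: "2 \<le> k" "i + (k - i) = k" "1 \<le> k - i" "i \<le> k"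
    by auto
  define a where "a = alpha k \<gamma>"
  have a: "0 < a" "a < 1" "\<gamma> < a"
    using alpha_spec[OF assms k(1)] gamma_of_less[of a k] k unfolding a_def by auto
  have "\<gamma>\<^sup>2 \<le> a\<^sup>2" "\<gamma>\<^sup>2 \<le> (1 / 2)\<^sup>2" using a assms by (auto intro: power_mono)
  then have bounded: "x \<in> {\<gamma>\<^sup>2 / 4..1 - \<gamma>\<^sup>2 / 4}" if "a\<^sup>2 / 4 \<le> x" "x \<le> 1 / 2" for x
    using that by (auto simp: power2_eq_square)
  show "e \<gamma> i k \<in> {\<gamma>\<^sup>2 / 4..1 - \<gamma>\<^sup>2 / 4}"
    using e_closed_form_bounds[OF a(1,2) \<open>1 \<le> i\<close> k(3)]
    unfolding e_closed_form[OF k(4)] Zc_def a_def[symmetric] k(2) by (intro bounded)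
  show "p01 \<gamma> i k \<in> {\<gamma>\<^sup>2 / 4..1 - \<gamma>\<^sup>2 / 4}"
    using p01_closed_form_bounds[OF a(1,2) k(3)]
    unfolding p01_def Let_def a_def[symmetric] by (intro bounded)
  show "p10 \<gamma> i k \<in> {\<gamma>\<^sup>2 / 4..1 - \<gamma>\<^sup>2 / 4}"
    using p10_closed_form_bounds[OF a(1,2) k(3)]
    unfolding p10_def Let_def a_def[symmetric] by (intro bounded)
qed

end
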